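(* Consider a slender, possibly compressible/extensible filament moving in the plane (the $x$–$y$ plane) in an inertialess medium described by resistive force theory, with isotropic drag, i.e. $\gamma := C_\perp / C_\parallel = 1$. Let the filament be parametrised by a Lagrangian label $s_0 \in [0, L_0]$ (arc length in a reference configuration of length $L_0$), with current arc length $s = s(s_0,t)$ satisfying $\partial s/\partial s_0 = 1 + \eta\, p(s_0,t)$ for a constant $\eta$ and a prescribed function $p$, so that the current length is $L(t) = \int_0^{L_0}(1+\eta p(s_0,t))\,\mathrm{d}s_0$. Let $\bm{x}(s,t)$ denote the position in the laboratory frame of the material point with current arc length $s$, and define the centre of geometry $$\overline{\bm{X}}(t) = \frac{1}{L(t)} \int_0^{L(t)} \bm{x}(s,t)\,\mathrm{d}s .$$ Then: (i) if the compression is spatially uniform, i.e. $\partial p/\partial s_0 = 0$ for all times, then $\mathrm{d}\overline{\bm{X}}/\mathrm{d}t = \bm{0}$ for all times, so no net motion is possible; (ii) otherwise (if $\partial p/\partial s_0 \neq 0$), net motion is possible, i.e. $\mathrm{d}\overline{\bm{X}}/\mathrm{d}t$ need not vanish.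
   Context: Kinematics: the shape of the filament in a body-fixed frame is prescribed (through the compression function $p(s_0,t)$ above and a prescribed tangent-angle function $\tilde\theta(s_0,t)$ giving the body-frame position $\tilde{\bm{x}}(s_0,t)$); the laboratory position is $\bm{x} = \bm{X}(t) + \mathbf{R}_{\Theta(t)}\tilde{\bm{x}}(s_0,t)$, where $\bm{X}(t)$ and the rotation angle $\Theta(t)$ (with $\mathbf{R}_\Theta$ the planar rotation matrix) are unknowns of the rigid-body motion. The local velocity of a material point is the Lagrangian derivative $D\bm{x}/Dt = \partial \bm{x}(s_0,t)/\partial t$ at fixed $s_0$. Resistive force theory: the force per unit (current) length exerted by the medium on the filament is $\bm{f} = -C_\parallel\,(\tfrac{D\bm{x}}{Dt}\cdot \bm{e}_\parallel)\,\bm{e}_\parallel - C_\perp\,(\tfrac{D\bm{x}}{Dt}\cdot \bm{e}_\perp)\,\bm{e}_\perp$, where $\bm{e}_\parallel, \bm{e}_\perp$ are the local unit tangent and normal vectors and $C_\parallel, C_\perp > 0$ are the tangential and normal drag coefficients; isotropic drag $\gamma = 1$ means $C_\parallel = C_\perp = C$, so $\bm{f} = -C\, D\bm{x}/Dt$. Dynamics: the rigid motion $(\bm{X}(t),\Theta(t))$ is determined by the force-free and torque-free conditions $\int_0^{L(t)} \bm{f}\,\mathrm{d}s = \bm{0}$ and $\int_0^{L(t)} \tilde{\bm{x}} \times \tilde{\bm{f}}\,\mathrm{d}s = \bm{0}$ at every time (no external forces or torques). *)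

theory Defs
  imports "HOL-Analysis.Analysis"
begin

text \<open>The plane is modelled by the complex numbers (the x-y plane).
  Parameters: eta (compressibility constant), p (compression function),
  th (body-frame tangent angle), X (lab position of the body frame origin),
  Th (rotation angle of the body frame).\<close>

definition cross2 :: "complex \<Rightarrow> complex \<Rightarrow> real" where
  "cross2 a b = Im (cnj a * b)"

definition rot :: "real \<Rightarrow> complex \<Rightarrow> complex" where
  "rot Th z = cis Th * z"

definition body_pos :: "real \<Rightarrow> (real \<Rightarrow> real \<Rightarrow> real) \<Rightarrow> (real \<Rightarrow> real \<Rightarrow> real)
    \<Rightarrow> real \<Rightarrow> real \<Rightarrow> complex" where
  "body_pos eta p th s0 t =
     integral {0..s0} (\<lambda>\<sigma>. complex_of_real (1 + eta * p \<sigma> t) * cis (th \<sigma> t))"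

definition lab_pos :: "real \<Rightarrow> (real \<Rightarrow> real \<Rightarrow> real) \<Rightarrow> (real \<Rightarrow> real \<Rightarrow> real)
    \<Rightarrow> (real \<Rightarrow> complex) \<Rightarrow> (real \<Rightarrow> real) \<Rightarrow> real \<Rightarrow> real \<Rightarrow> complex" where
  "lab_pos eta p th X Th s0 t = X t + rot (Th t) (body_pos eta p th s0 t)"

definition lab_vel :: "real \<Rightarrow> (real \<Rightarrow> real \<Rightarrow> real) \<Rightarrow> (real \<Rightarrow> real \<Rightarrow> real)
    \<Rightarrow> (real \<Rightarrow> complex) \<Rightarrow> (real \<Rightarrow> real) \<Rightarrow> real \<Rightarrow> real \<Rightarrow> complex" where
  "lab_vel eta p th X Th s0 t = vector_derivative (\<lambda>\<tau>. lab_pos eta p th X Th s0 \<tau>) (at t)"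

definition e_par :: "(real \<Rightarrow> real \<Rightarrow> real) \<Rightarrow> (real \<Rightarrow> real) \<Rightarrow> real \<Rightarrow> real \<Rightarrow> complex" where
  "e_par th Th s0 t = cis (Th t + th s0 t)"

definition e_perp :: "(real \<Rightarrow> real \<Rightarrow> real) \<Rightarrow> (real \<Rightarrow> real) \<Rightarrow> real \<Rightarrow> real \<Rightarrow> complex" where
  "e_perp th Th s0 t = \<i> * e_par th Th s0 t"

definition rft_force :: "real \<Rightarrow> real \<Rightarrow> real \<Rightarrow> (real \<Rightarrow> real \<Rightarrow> real) \<Rightarrow> (real \<Rightarrow> real \<Rightarrow> real)
    \<Rightarrow> (real \<Rightarrow> complex) \<Rightarrow> (real \<Rightarrow> real) \<Rightarrow> real \<Rightarrow> real \<Rightarrow> complex" where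
  "rft_force Cpar Cperp eta p th X Th s0 t =
     (let v = lab_vel eta p th X Th s0 t; ep = e_par th Th s0 t; en = e_perp th Th s0 t
      in - ((Cpar * (v \<bullet> ep)) *\<^sub>R ep) - ((Cperp * (v \<bullet> en)) *\<^sub>R en))"

definition cur_length :: "real \<Rightarrow> real \<Rightarrow> (real \<Rightarrow> real \<Rightarrow> real) \<Rightarrow> real \<Rightarrow> real" where
  "cur_length L0 eta p t = integral {0..L0} (\<lambda>s0. 1 + eta * p s0 t)"

text \<open>Centre of geometry (1/L) int_0^L x ds, written in Lagrangian coordinates
  via ds = (1 + eta p) ds0.\<close>
definition centre_geom :: "real \<Rightarrow> real \<Rightarrow> (real \<Rightarrow> real \<Rightarrow> real) \<Rightarrow> (real \<Rightarrow> real \<Rightarrow> real)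
    \<Rightarrow> (real \<Rightarrow> complex) \<Rightarrow> (real \<Rightarrow> real) \<Rightarrow> real \<Rightarrow> complex" where
  "centre_geom L0 eta p th X Th t =
     (1 / cur_length L0 eta p t) *\<^sub>R
       integral {0..L0} (\<lambda>s0. (1 + eta * p s0 t) *\<^sub>R lab_pos eta p th X Th s0 t)"

definition force_free :: "real \<Rightarrow> real \<Rightarrow> real \<Rightarrow> real \<Rightarrow> (real \<Rightarrow> real \<Rightarrow> real)
    \<Rightarrow> (real \<Rightarrow> real \<Rightarrow> real) \<Rightarrow> (real \<Rightarrow> complex) \<Rightarrow> (real \<Rightarrow> real) \<Rightarrow> bool" where
  "force_free L0 Cpar Cperp eta p th X Th \<longleftrightarrow>
     (\<forall>t. integral {0..L0}
            (\<lambda>s0. (1 + eta * p s0 t) *\<^sub>R rft_force Cpar Cperp eta p th X Th s0 t) = 0)"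

text \<open>Torque-free condition int_0^L xt \<times> ft ds = 0, with body-frame force ft = R_{-Th} f.\<close>
definition torque_free :: "real \<Rightarrow> real \<Rightarrow> real \<Rightarrow> real \<Rightarrow> (real \<Rightarrow> real \<Rightarrow> real)
    \<Rightarrow> (real \<Rightarrow> real \<Rightarrow> real) \<Rightarrow> (real \<Rightarrow> complex) \<Rightarrow> (real \<Rightarrow> real) \<Rightarrow> bool" where
  "torque_free L0 Cpar Cperp eta p th X Th \<longleftrightarrow>
     (\<forall>t. integral {0..L0}
            (\<lambda>s0. (1 + eta * p s0 t) *
                   cross2 (body_pos eta p th s0 t)
                          (rot (- Th t) (rft_force Cpar Cperp eta p th X Th s0 t))) = 0)"

definition rft_swimmer :: "real \<Rightarrow> real \<Rightarrow> real \<Rightarrow> real \<Rightarrow> (real \<Rightarrow> real \<Rightarrow> real)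
    \<Rightarrow> (real \<Rightarrow> real \<Rightarrow> real) \<Rightarrow> (real \<Rightarrow> complex) \<Rightarrow> (real \<Rightarrow> real) \<Rightarrow> bool" where
  "rft_swimmer L0 Cpar Cperp eta p th X Th \<longleftrightarrow>
     L0 > 0 \<and> Cpar > 0 \<and> Cperp > 0 \<and>
     (\<forall>s0\<in>{0..L0}. \<forall>t. 1 + eta * p s0 t > 0) \<and>
     continuous_on ({0..L0} \<times> UNIV) (\<lambda>(s, t). p s t) \<and>
     (\<exists>pt. continuous_on ({0..L0} \<times> UNIV) (\<lambda>(s, t). pt s t) \<and>
        (\<forall>s0\<in>{0..L0}. \<forall>t. ((\<lambda>\<tau>. p s0 \<tau>) has_real_derivative pt s0 t) (at t))) \<and>
     continuous_on ({0..L0} \<times> UNIV) (\<lambda>(s, t). th s t) \<and>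
     (\<exists>tht. continuous_on ({0..L0} \<times> UNIV) (\<lambda>(s, t). tht s t) \<and>
        (\<forall>s0\<in>{0..L0}. \<forall>t. ((\<lambda>\<tau>. th s0 \<tau>) has_real_derivative tht s0 t) (at t))) \<and>
     (\<forall>t. X differentiable (at t)) \<and>
     (\<forall>t. Th differentiable (at t)) \<and>
     force_free L0 Cpar Cperp eta p th X Th \<and>
     torque_free L0 Cpar Cperp eta p th X Th"

end

theory Submission
  imports Defs
begin

text \<open>With isotropic drag the force density is \<open>-C\<close> times the material velocity, so the
  force-free condition says that the mean velocity, weighted by the line element \<open>1 + \<eta> p\<close>,
  vanishes. If the compression is uniform along the filament, this weight is constant and cancels
  both from that condition and from the centre of geometry, whose velocity is therefore the plain
  mean velocity, i.e. zero. The analytic work lies in differentiating the centre of geometry under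
  the integral sign: the body position is itself an integral of the tangent, and Cauchy's formula
  for repeated integration turns the resulting double integral into a single one to which the
  Leibniz rule applies.

  For a non-uniform compression, a straight filament on the x-axis whose line element is
  \<open>1 + sin t (s\<^sub>0 - 1/2)\<close> must, by the force balance, translate with velocity \<open>cos t / 12\<close>,
  and so does its centre of geometry.\<close>

section \<open>Differentiation under the integral sign\<close>

lemma has_vector_derivative_cis:
  assumes "(f has_real_derivative d) (at x within A)"
  shows "((\<lambda>x. cis (f x)) has_vector_derivative of_real d * (\<i> * cis (f x))) (at x within A)"
proof -
  have "(f has_derivative (\<lambda>t. t * d)) (at x within A)"
    using assms by (simp add: has_field_derivative_def mult_commute_abs)
  from has_derivative_cis[OF this] show ?thesis
    by (simp add: has_vector_derivative_def scaleR_conv_of_real algebra_simps)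
qed

lemma has_integral_indefinite_integral:
  fixes k :: "real \<Rightarrow> 'a::banach"
  assumes k: "continuous_on {0..L} k" and L: "0 \<le> L"
  shows "((\<lambda>s. integral {0..s} k) has_integral integral {0..L} (\<lambda>\<sigma>. (L - \<sigma>) *\<^sub>R k \<sigma>)) {0..L}"
proof -
  define \<Phi> where "\<Phi> s = s *\<^sub>R integral {0..s} k - integral {0..s} (\<lambda>\<sigma>. \<sigma> *\<^sub>R k \<sigma>)" for s
  have k': "continuous_on {0..L} (\<lambda>\<sigma>. \<sigma> *\<^sub>R k \<sigma>)"
    by (intro continuous_intros k)
  have "((\<lambda>s. integral {0..s} k) has_integral (\<Phi> L - \<Phi> 0)) {0..L}"
  proof (rule fundamental_theorem_of_calculus[OF L])
    fix x assume x: "x \<in> {0..L}"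
    have "(\<Phi> has_vector_derivative x *\<^sub>R k x + 1 *\<^sub>R integral {0..x} k - x *\<^sub>R k x) (at x within {0..L})"
      unfolding \<Phi>_def
      by (intro has_vector_derivative_diff has_vector_derivative_scaleR DERIV_ident
          integral_has_vector_derivative[OF k x] integral_has_vector_derivative[OF k' x])
    then show "(\<Phi> has_vector_derivative integral {0..x} k) (at x within {0..L})"
      by simp
  qed
  moreover have "\<Phi> L - \<Phi> 0 = integral {0..L} (\<lambda>\<sigma>. (L - \<sigma>) *\<^sub>R k \<sigma>)"
    using integral_diff[OF integrable_cmul[OF integrable_continuous_real[OF k]]
        integrable_continuous_real[OF k']]
    by (simp add: \<Phi>_def scaleR_diff_left)
  ultimately show ?thesis
    by simp
qed

lemma has_vector_derivative_parametric_integral: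
  fixes g h :: "real \<Rightarrow> real \<Rightarrow> 'a::banach"
  assumes g: "\<And>\<sigma> \<tau>. \<sigma> \<in> {a..b} \<Longrightarrow> ((\<lambda>\<tau>. g \<sigma> \<tau>) has_vector_derivative h \<sigma> \<tau>) (at \<tau>)"
    and g_cont: "\<And>\<tau>. continuous_on {a..b} (\<lambda>\<sigma>. g \<sigma> \<tau>)"
    and h_cont: "continuous_on ({a..b} \<times> UNIV) (\<lambda>(\<sigma>, \<tau>). h \<sigma> \<tau>)"
  shows "((\<lambda>\<tau>. integral {a..b} (\<lambda>\<sigma>. g \<sigma> \<tau>)) has_vector_derivative
           integral {a..b} (\<lambda>\<sigma>. h \<sigma> t)) (at t)"
  using leibniz_rule_vector_derivative[of UNIV a b "\<lambda>\<tau> \<sigma>. g \<sigma> \<tau>" "\<lambda>\<tau> \<sigma>. h \<sigma> \<tau>" t]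
    g integrable_continuous_real[OF g_cont] continuous_on_swap_args[OF h_cont]
  by simp

lemma continuous_on_slice:
  assumes "continuous_on (A \<times> B) (\<lambda>(x, y). f x y)" "C \<subseteq> A" "t \<in> B"
  shows "continuous_on C (\<lambda>x. f x t)"
  by (rule continuous_on_compose_Pair[OF assms(1) continuous_on_id continuous_on_const])
    (use assms(2,3) in auto)

lemma has_vector_derivative_iterated_integral:
  fixes g h :: "real \<Rightarrow> real \<Rightarrow> 'a::banach"
  assumes L: "0 \<le> L"
    and g: "\<And>\<sigma> \<tau>. \<sigma> \<in> {0..L} \<Longrightarrow> ((\<lambda>\<tau>. g \<sigma> \<tau>) has_vector_derivative h \<sigma> \<tau>) (at \<tau>)"
    and g_cont: "\<And>\<tau>. continuous_on {0..L} (\<lambda>\<sigma>. g \<sigma> \<tau>)"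
    and h_cont: "continuous_on ({0..L} \<times> UNIV) (\<lambda>(\<sigma>, \<tau>). h \<sigma> \<tau>)"
  shows "((\<lambda>\<tau>. integral {0..L} (\<lambda>s. integral {0..s} (\<lambda>\<sigma>. g \<sigma> \<tau>))) has_vector_derivative
           integral {0..L} (\<lambda>s. integral {0..s} (\<lambda>\<sigma>. h \<sigma> t))) (at t)"
proof -
  have h_cont': "continuous_on {0..L} (\<lambda>\<sigma>. h \<sigma> t)"
    by (rule continuous_on_slice[OF h_cont]) auto
  have "((\<lambda>\<tau>. integral {0..L} (\<lambda>\<sigma>. (L - \<sigma>) *\<^sub>R g \<sigma> \<tau>)) has_vector_derivative
      integral {0..L} (\<lambda>\<sigma>. (L - \<sigma>) *\<^sub>R h \<sigma> t)) (at t)"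
  proof (rule has_vector_derivative_parametric_integral)
    show "((\<lambda>\<tau>. (L - \<sigma>) *\<^sub>R g \<sigma> \<tau>) has_vector_derivative (L - \<sigma>) *\<^sub>R h \<sigma> \<tau>) (at \<tau>)"
      if "\<sigma> \<in> {0..L}" for \<sigma> \<tau>
      using has_vector_derivative_scaleR[OF DERIV_const g[OF that]] by simp
    show "continuous_on {0..L} (\<lambda>\<sigma>. (L - \<sigma>) *\<^sub>R g \<sigma> \<tau>)" for \<tau>
      by (intro continuous_intros g_cont)
    show "continuous_on ({0..L} \<times> UNIV) (\<lambda>(\<sigma>, \<tau>). (L - \<sigma>) *\<^sub>R h \<sigma> \<tau>)"
      using h_cont by (simp add: case_prod_beta') (intro continuous_intros)
  qed
  then show ?thesis
    using has_integral_indefinite_integral[OF g_cont L, THEN integral_unique]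
      has_integral_indefinite_integral[OF h_cont' L, THEN integral_unique]
    by simp
qed

lemma has_vector_derivative_integral_rigid_motion:
  fixes B :: "real \<Rightarrow> real \<Rightarrow> complex"
  assumes ab: "a \<le> b"
    and X: "(X has_vector_derivative X') (at t)"
    and Th: "(Th has_real_derivative Th') (at t)"
    and B: "((\<lambda>\<tau>. integral {a..b} (\<lambda>s. B s \<tau>)) has_vector_derivative B') (at t)"
    and B_int: "\<And>\<tau>. (\<lambda>s. B s \<tau>) integrable_on {a..b}"
  shows "((\<lambda>\<tau>. integral {a..b} (\<lambda>s. X \<tau> + cis (Th \<tau>) * B s \<tau>)) has_vector_derivative
           (b - a) *\<^sub>R X' + of_real Th' * (\<i> * cis (Th t)) * integral {a..b} (\<lambda>s. B s t)
             + cis (Th t) * B') (at t)"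
proof -
  have integral_eq: "(\<lambda>\<tau>. integral {a..b} (\<lambda>s. X \<tau> + cis (Th \<tau>) * B s \<tau>))
      = (\<lambda>\<tau>. (b - a) *\<^sub>R X \<tau> + cis (Th \<tau>) * integral {a..b} (\<lambda>s. B s \<tau>))"
    using integral_add[OF integrable_const_ivl integrable_on_mult_right[OF B_int]] ab by simp
  have "((\<lambda>\<tau>. (b - a) *\<^sub>R X \<tau>) has_vector_derivative (b - a) *\<^sub>R X') (at t)"
    using has_vector_derivative_scaleR[OF DERIV_const X] by simp
  from has_vector_derivative_add[OF this
      has_vector_derivative_mult[OF has_vector_derivative_cis[OF Th] B]]
  show ?thesis
    unfolding integral_eq by (simp add: algebra_simps)
qed

section \<open>Kinematics of the filament\<close>

locale filament_kinematics =
  fixes L0 eta :: real and p pt th tht :: "real \<Rightarrow> real \<Rightarrow> real"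
  assumes L0_nonneg: "0 \<le> L0"
    and p_cont: "continuous_on ({0..L0} \<times> UNIV) (\<lambda>(s, t). p s t)"
    and pt_cont: "continuous_on ({0..L0} \<times> UNIV) (\<lambda>(s, t). pt s t)"
    and p_deriv: "\<And>s0 t. s0 \<in> {0..L0} \<Longrightarrow> ((\<lambda>\<tau>. p s0 \<tau>) has_real_derivative pt s0 t) (at t)"
    and th_cont: "continuous_on ({0..L0} \<times> UNIV) (\<lambda>(s, t). th s t)"
    and tht_cont: "continuous_on ({0..L0} \<times> UNIV) (\<lambda>(s, t). tht s t)"
    and th_deriv: "\<And>s0 t. s0 \<in> {0..L0} \<Longrightarrow> ((\<lambda>\<tau>. th s0 \<tau>) has_real_derivative tht s0 t) (at t)"
begin

definition tangent_density :: "real \<Rightarrow> real \<Rightarrow> complex" where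
  "tangent_density \<sigma> t = of_real (1 + eta * p \<sigma> t) * cis (th \<sigma> t)"

definition tangent_density_dt :: "real \<Rightarrow> real \<Rightarrow> complex" where
  "tangent_density_dt \<sigma> t = of_real (eta * pt \<sigma> t) * cis (th \<sigma> t)
     + of_real (1 + eta * p \<sigma> t) * (of_real (tht \<sigma> t) * (\<i> * cis (th \<sigma> t)))"

definition body_vel :: "real \<Rightarrow> real \<Rightarrow> complex" where
  "body_vel s0 t = integral {0..s0} (\<lambda>\<sigma>. tangent_density_dt \<sigma> t)"

lemma body_pos_eq: "body_pos eta p th s0 t = integral {0..s0} (\<lambda>\<sigma>. tangent_density \<sigma> t)"
  by (simp add: body_pos_def tangent_density_def)

lemma tangent_density_has_vector_derivative:
  assumes "\<sigma> \<in> {0..L0}"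
  shows "((\<lambda>\<tau>. tangent_density \<sigma> \<tau>) has_vector_derivative tangent_density_dt \<sigma> t) (at t)"
proof -
  have "((\<lambda>\<tau>. 1 + eta * p \<sigma> \<tau>) has_real_derivative eta * pt \<sigma> t) (at t)"
    using p_deriv[OF assms] by (auto intro!: derivative_eq_intros)
  from has_vector_derivative_mult[OF has_vector_derivative_of_real[OF this]
      has_vector_derivative_cis[OF th_deriv[OF assms]]]
  show ?thesis
    by (simp add: tangent_density_def tangent_density_dt_def add.commute)
qed

lemma continuous_on_tangent_density:
  "continuous_on ({0..L0} \<times> UNIV) (\<lambda>(\<sigma>, t). tangent_density \<sigma> t)"
  using p_cont th_cont unfolding tangent_density_def case_prod_beta'
  by (intro continuous_intros)

lemma continuous_on_tangent_density_dt:
  "continuous_on ({0..L0} \<times> UNIV) (\<lambda>(\<sigma>, t). tangent_density_dt \<sigma> t)"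
  using p_cont pt_cont th_cont tht_cont unfolding tangent_density_dt_def case_prod_beta'
  by (intro continuous_intros)

lemma body_pos_has_vector_derivative:
  assumes "s0 \<in> {0..L0}"
  shows "((\<lambda>\<tau>. body_pos eta p th s0 \<tau>) has_vector_derivative body_vel s0 t) (at t)"
  unfolding body_pos_eq body_vel_def
proof (rule has_vector_derivative_parametric_integral)
  show "((\<lambda>\<tau>. tangent_density \<sigma> \<tau>) has_vector_derivative tangent_density_dt \<sigma> \<tau>) (at \<tau>)"
    if "\<sigma> \<in> {0..s0}" for \<sigma> \<tau>
    using that assms by (intro tangent_density_has_vector_derivative) auto
  show "continuous_on {0..s0} (\<lambda>\<sigma>. tangent_density \<sigma> \<tau>)" for \<tau>
    using assms by (intro continuous_on_slice[OF continuous_on_tangent_density]) auto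
  show "continuous_on ({0..s0} \<times> UNIV) (\<lambda>(\<sigma>, \<tau>). tangent_density_dt \<sigma> \<tau>)"
    using assms by (intro continuous_on_subset[OF continuous_on_tangent_density_dt]) auto
qed

lemma integral_body_pos_has_vector_derivative:
  "((\<lambda>\<tau>. integral {0..L0} (\<lambda>s0. body_pos eta p th s0 \<tau>)) has_vector_derivative
      integral {0..L0} (\<lambda>s0. body_vel s0 t)) (at t)"
  unfolding body_pos_eq body_vel_def
  by (intro has_vector_derivative_iterated_integral L0_nonneg tangent_density_has_vector_derivative
      continuous_on_slice[OF continuous_on_tangent_density] continuous_on_tangent_density_dt) auto

lemma body_pos_integrable: "(\<lambda>s0. body_pos eta p th s0 t) integrable_on {0..L0}"
  unfolding body_pos_eq
  by (intro integrable_continuous_real indefinite_integral_continuous_1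
      continuous_on_slice[OF continuous_on_tangent_density]) auto

lemma body_vel_integrable: "(\<lambda>s0. body_vel s0 t) integrable_on {0..L0}"
  unfolding body_vel_def
  by (intro integrable_continuous_real indefinite_integral_continuous_1
      continuous_on_slice[OF continuous_on_tangent_density_dt]) auto

lemma lab_vel_eq:
  assumes X: "(X has_vector_derivative X') (at t)"
    and Th: "(Th has_real_derivative Th') (at t)"
    and s0: "s0 \<in> {0..L0}"
  shows "lab_vel eta p th X Th s0 t
    = X' + of_real Th' * (\<i> * cis (Th t)) * body_pos eta p th s0 t + cis (Th t) * body_vel s0 t"
proof -
  have "((\<lambda>\<tau>. lab_pos eta p th X Th s0 \<tau>) has_vector_derivative
      X' + (cis (Th t) * body_vel s0 t + of_real Th' * (\<i> * cis (Th t)) * body_pos eta p th s0 t)) (at t)"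
    unfolding lab_pos_def rot_def
    by (intro has_vector_derivative_add has_vector_derivative_mult has_vector_derivative_cis
        X Th body_pos_has_vector_derivative s0)
  then show ?thesis
    unfolding lab_vel_def by (subst vector_derivative_at) (auto simp: algebra_simps)
qed

lemma integral_lab_pos_has_vector_derivative:
  assumes "X differentiable (at t)" "Th differentiable (at t)"
  shows "((\<lambda>\<tau>. integral {0..L0} (\<lambda>s0. lab_pos eta p th X Th s0 \<tau>)) has_vector_derivative
           integral {0..L0} (\<lambda>s0. lab_vel eta p th X Th s0 t)) (at t)"
proof -
  obtain X' Th' where X: "(X has_vector_derivative X') (at t)"
    and Th: "(Th has_real_derivative Th') (at t)"
    using assms by (metis vector_derivative_works DERIV_deriv_iff_real_differentiable)
  have "integral {0..L0} (\<lambda>s0. lab_vel eta p th X Th s0 t)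
      = integral {0..L0} (\<lambda>s0. X' + of_real Th' * (\<i> * cis (Th t)) * body_pos eta p th s0 t
                                  + cis (Th t) * body_vel s0 t)"
    using lab_vel_eq[OF X Th] by (rule integral_cong)
  also have "\<dots> = L0 *\<^sub>R X' + of_real Th' * (\<i> * cis (Th t)) * integral {0..L0} (\<lambda>s0. body_pos eta p th s0 t)
      + cis (Th t) * integral {0..L0} (\<lambda>s0. body_vel s0 t)"
    using L0_nonneg
      integral_add[OF integrable_add[OF integrable_const_ivl integrable_on_mult_right[OF body_pos_integrable]]
        integrable_on_mult_right[OF body_vel_integrable]]
      integral_add[OF integrable_const_ivl integrable_on_mult_right[OF body_pos_integrable]]
    by simp
  finally show ?thesis
    using has_vector_derivative_integral_rigid_motion[OF L0_nonneg X Th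
        integral_body_pos_has_vector_derivative body_pos_integrable]
    by (simp add: lab_pos_def rot_def)
qed

end

section \<open>Isotropic drag and uniform compression\<close>

lemma orthonormal_frame_expansion:
  fixes u v :: complex
  assumes "norm u = 1"
  shows "(v \<bullet> u) *\<^sub>R u + (v \<bullet> (\<i> * u)) *\<^sub>R (\<i> * u) = v"
proof -
  have "(Re u)\<^sup>2 + (Im u)\<^sup>2 = 1"
    using assms by (simp add: cmod_def)
  then show ?thesis
    by (simp add: complex_eq_iff inner_complex_def algebra_simps power2_eq_square) algebra
qed

lemma rft_force_isotropic:
  "rft_force C C eta p th X Th s0 t = - (C *\<^sub>R lab_vel eta p th X Th s0 t)"
proof -
  let ?v = "lab_vel eta p th X Th s0 t" and ?e = "cis (Th t + th s0 t)"
  have "rft_force C C eta p th X Th s0 t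
      = - (C *\<^sub>R ((?v \<bullet> ?e) *\<^sub>R ?e + (?v \<bullet> (\<i> * ?e)) *\<^sub>R (\<i> * ?e)))"
    by (simp add: rft_force_def Let_def e_perp_def e_par_def scaleR_add_right)
  then show ?thesis
    by (simp add: orthonormal_frame_expansion)
qed

lemma has_real_derivative_zero_eq_endpoint:
  fixes f :: "real \<Rightarrow> real"
  assumes "\<forall>x\<in>{a..b}. (f has_real_derivative 0) (at x within {a..b})" "x \<in> {a..b}"
  shows "f x = f a"
proof -
  have "\<exists>c. \<forall>y\<in>{a..b}. f y = c"
    by (rule has_field_derivative_zero_constant) (use assms(1) in auto)
  then obtain c where "\<forall>y\<in>{a..b}. f y = c"
    by blast
  moreover have "a \<in> {a..b}"
    using assms(2) by simp
  ultimately show ?thesis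
    using assms(2) by simp
qed

lemma centre_geom_uniform_stretch:
  assumes L0: "0 < L0"
    and uniform: "\<And>s0. s0 \<in> {0..L0} \<Longrightarrow> 1 + eta * p s0 t = w"
    and w: "w \<noteq> 0"
  shows "centre_geom L0 eta p th X Th t = (1 / L0) *\<^sub>R integral {0..L0} (\<lambda>s0. lab_pos eta p th X Th s0 t)"
proof -
  have "cur_length L0 eta p t = integral {0..L0} (\<lambda>s0. w)"
    unfolding cur_length_def by (rule integral_cong) (simp add: uniform)
  moreover have "integral {0..L0} (\<lambda>s0. (1 + eta * p s0 t) *\<^sub>R lab_pos eta p th X Th s0 t)
      = integral {0..L0} (\<lambda>s0. w *\<^sub>R lab_pos eta p th X Th s0 t)"
    by (rule integral_cong) (simp add: uniform)
  ultimately show ?thesis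
    using L0 w by (simp add: centre_geom_def)
qed

lemma force_free_isotropic_uniform_stretch:
  assumes "force_free L0 C C eta p th X Th" "C \<noteq> 0"
    and uniform: "\<And>s0. s0 \<in> {0..L0} \<Longrightarrow> 1 + eta * p s0 t = w"
    and w: "w \<noteq> 0"
  shows "integral {0..L0} (\<lambda>s0. lab_vel eta p th X Th s0 t) = 0"
proof -
  have "integral {0..L0} (\<lambda>s0. (1 + eta * p s0 t) *\<^sub>R rft_force C C eta p th X Th s0 t) = 0"
    using assms(1) by (simp add: force_free_def)
  also have "integral {0..L0} (\<lambda>s0. (1 + eta * p s0 t) *\<^sub>R rft_force C C eta p th X Th s0 t)
      = integral {0..L0} (\<lambda>s0. (- (w * C)) *\<^sub>R lab_vel eta p th X Th s0 t)"
    by (rule integral_cong) (simp add: uniform rft_force_isotropic)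
  finally show ?thesis
    using assms(2) w by simp
qed

theorem centre_geom_stationary_if_uniform_compression:
  assumes swimmer: "rft_swimmer L0 C C eta p th X Th"
    and uniform: "\<forall>t. \<forall>s0\<in>{0..L0}. ((\<lambda>\<sigma>. p \<sigma> t) has_real_derivative 0) (at s0 within {0..L0})"
  shows "(centre_geom L0 eta p th X Th has_vector_derivative 0) (at t)"
proof -
  obtain pt tht
    where "continuous_on ({0..L0} \<times> UNIV) (\<lambda>(s, t). pt s t)"
      "\<forall>s0\<in>{0..L0}. \<forall>t. ((\<lambda>\<tau>. p s0 \<tau>) has_real_derivative pt s0 t) (at t)"
      "continuous_on ({0..L0} \<times> UNIV) (\<lambda>(s, t). tht s t)"
      "\<forall>s0\<in>{0..L0}. \<forall>t. ((\<lambda>\<tau>. th s0 \<tau>) has_real_derivative tht s0 t) (at t)"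
    using swimmer unfolding rft_swimmer_def by blast
  then interpret filament_kinematics L0 eta p pt th tht
    using swimmer unfolding rft_swimmer_def by unfold_locales simp_all
  have L0: "0 < L0" and C: "C \<noteq> 0" and X: "X differentiable (at t)" and Th: "Th differentiable (at t)"
    and ff: "force_free L0 C C eta p th X Th"
    using swimmer unfolding rft_swimmer_def by simp_all
  have "0 \<in> {0..L0}" and "\<forall>s0\<in>{0..L0}. \<forall>\<tau>. 0 < 1 + eta * p s0 \<tau>"
    using L0 swimmer unfolding rft_swimmer_def by simp_all
  then have stretch: "1 + eta * p 0 \<tau> \<noteq> 0" for \<tau>
    by (metis less_irrefl)
  have p_uniform: "1 + eta * p s0 \<tau> = 1 + eta * p 0 \<tau>" if "s0 \<in> {0..L0}" for s0 \<tau>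
  proof -
    have "p s0 \<tau> = p 0 \<tau>"
      using uniform that by (intro has_real_derivative_zero_eq_endpoint) auto
    then show ?thesis
      by simp
  qed
  have "centre_geom L0 eta p th X Th \<tau> = (1 / L0) *\<^sub>R integral {0..L0} (\<lambda>s0. lab_pos eta p th X Th s0 \<tau>)"
    for \<tau>
    using centre_geom_uniform_stretch[where t = \<tau>, OF L0 p_uniform stretch] .
  then have centre_eq: "centre_geom L0 eta p th X Th
      = (\<lambda>\<tau>. (1 / L0) *\<^sub>R integral {0..L0} (\<lambda>s0. lab_pos eta p th X Th s0 \<tau>))"
    by (rule ext)
  have "((\<lambda>\<tau>. (1 / L0) *\<^sub>R integral {0..L0} (\<lambda>s0. lab_pos eta p th X Th s0 \<tau>)) has_vector_derivative
      (1 / L0) *\<^sub>R integral {0..L0} (\<lambda>s0. lab_vel eta p th X Th s0 t)) (at t)"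
    using has_vector_derivative_scaleR[OF DERIV_const integral_lab_pos_has_vector_derivative[OF X Th]]
    by simp
  moreover have "integral {0..L0} (\<lambda>s0. lab_vel eta p th X Th s0 t) = 0"
    using force_free_isotropic_uniform_stretch[where t = t, OF ff C p_uniform stretch] .
  ultimately show ?thesis
    unfolding centre_eq by simp
qed

section \<open>A swimmer with graded compression\<close>

lemma has_integral_antiderivative:
  fixes F f :: "real \<Rightarrow> real"
  assumes "a \<le> b" "\<And>x. (F has_real_derivative f x) (at x)"
  shows "(f has_integral F b - F a) {a..b}"
  by (rule fundamental_theorem_of_calculus[OF assms(1)])
    (use assms(2) in \<open>auto simp: has_real_derivative_iff_has_vector_derivative
      intro: has_vector_derivative_at_within\<close>)

definition graded_compression :: "real \<Rightarrow> real \<Rightarrow> real" where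
  "graded_compression s t = sin t * (s - 1/2)"

text \<open>The drift is dictated by the force balance: it cancels the mean \<open>-cos t / 12\<close> of the
  material velocity \<open>cos t (s\<^sup>2 - s) / 2\<close> relative to the frame, while the odd weight
  \<open>s - 1/2\<close> contributes nothing.\<close>

definition graded_drift :: "real \<Rightarrow> complex" where
  "graded_drift t = of_real (sin t / 12)"

lemma graded_body_pos:
  assumes "0 \<le> s0"
  shows "body_pos 1 graded_compression (\<lambda>s t. 0) s0 t = of_real (s0 + sin t * (s0\<^sup>2 - s0) / 2)"
proof -
  define F where "F \<sigma> = \<sigma> + sin t * (\<sigma>\<^sup>2 - \<sigma>) / 2" for \<sigma>
  have "((\<lambda>\<sigma>. 1 + sin t * (\<sigma> - 1/2)) has_integral F s0 - F 0) {0..s0}"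
    unfolding F_def
    by (rule has_integral_antiderivative[OF assms])
      (auto intro!: derivative_eq_intros simp: field_simps power2_eq_square)
  from has_integral_of_real[OF this, where 'b = complex]
  show ?thesis
    by (simp add: body_pos_def graded_compression_def F_def integral_unique)
qed

lemma graded_lab_pos:
  "0 \<le> s0 \<Longrightarrow> lab_pos 1 graded_compression (\<lambda>s t. 0) graded_drift (\<lambda>t. 0) s0 t
     = of_real (sin t / 12 + s0 + sin t * (s0\<^sup>2 - s0) / 2)"
  by (simp add: lab_pos_def rot_def graded_body_pos graded_drift_def)

lemma graded_lab_vel:
  assumes "0 \<le> s0"
  shows "lab_vel 1 graded_compression (\<lambda>s t. 0) graded_drift (\<lambda>t. 0) s0 t
     = of_real (cos t / 12 + cos t * (s0\<^sup>2 - s0) / 2)"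
proof -
  have "((\<lambda>\<tau>. of_real (sin \<tau> / 12 + s0 + sin \<tau> * (s0\<^sup>2 - s0) / 2)) has_vector_derivative
      (of_real (cos t / 12 + cos t * (s0\<^sup>2 - s0) / 2) :: complex)) (at t)"
    by (rule has_vector_derivative_of_real) (auto intro!: derivative_eq_intros)
  then show ?thesis
    unfolding lab_vel_def graded_lab_pos[OF assms] by (rule vector_derivative_at)
qed

lemma graded_force_free: "force_free 1 1 1 1 graded_compression (\<lambda>s t. 0) graded_drift (\<lambda>t. 0)"
  unfolding force_free_def
proof
  fix t :: real
  define f where "f s = - (1 + sin t * (s - 1/2)) * (cos t / 12 + cos t * (s\<^sup>2 - s) / 2)" for s
  define G where "G s = - cos t * ((s - 1/2)^3 / 6 - (s - 1/2) / 24
      + sin t * ((s - 1/2)^4 / 8 - (s - 1/2)^2 / 48))" for s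
  have "(f has_integral G 1 - G 0) {0..1}"
    unfolding f_def G_def
    by (rule has_integral_antiderivative)
      (auto intro!: derivative_eq_intros simp: field_simps power2_eq_square power3_eq_cube)
  moreover have "G 1 - G 0 = 0"
    by (simp add: G_def power2_eq_square power3_eq_cube power4_eq_xxxx)
  ultimately have "(f has_integral 0) {0..1}"
    by simp
  then have integral_f: "((\<lambda>s. of_real (f s) :: complex) has_integral 0) {0..1}"
    by (metis has_integral_of_real of_real_0)
  have integrand_eq: "(1 + 1 * graded_compression s t) *\<^sub>R
      rft_force 1 1 1 graded_compression (\<lambda>s t. 0) graded_drift (\<lambda>t. 0) s t = of_real (f s)"
    if "s \<in> {0..1}" for s
  proof -
    have "(1 + 1 * graded_compression s t) *\<^sub>R
        rft_force 1 1 1 graded_compression (\<lambda>s t. 0) graded_drift (\<lambda>t. 0) s t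
        = (1 + sin t * (s - 1/2)) *\<^sub>R - of_real (cos t / 12 + cos t * (s\<^sup>2 - s) / 2)"
      using that by (simp add: rft_force_isotropic graded_lab_vel graded_compression_def)
    then show ?thesis
      by (simp only: f_def scaleR_conv_of_real of_real_mult of_real_minus mult_minus_left mult_minus_right)
  qed
  have "integral {0..1} (\<lambda>s0. (1 + 1 * graded_compression s0 t) *\<^sub>R
      rft_force 1 1 1 graded_compression (\<lambda>s t. 0) graded_drift (\<lambda>t. 0) s0 t)
      = integral {0..1} (\<lambda>s. of_real (f s))"
    by (rule integral_cong) (rule integrand_eq)
  also have "\<dots> = 0"
    by (rule integral_unique[OF integral_f])
  finally show "integral {0..1} (\<lambda>s0. (1 + 1 * graded_compression s0 t) *\<^sub>R
      rft_force 1 1 1 graded_compression (\<lambda>s t. 0) graded_drift (\<lambda>t. 0) s0 t) = 0" .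
qed

lemma graded_torque_free: "torque_free 1 1 1 1 graded_compression (\<lambda>s t. 0) graded_drift (\<lambda>t. 0)"
  unfolding torque_free_def
proof
  fix t :: real
  have torque_density: "(1 + 1 * graded_compression s0 t) * cross2 (body_pos 1 graded_compression (\<lambda>s t. 0) s0 t)
      (rot (- 0) (rft_force 1 1 1 graded_compression (\<lambda>s t. 0) graded_drift (\<lambda>t. 0) s0 t)) = 0"
    if "s0 \<in> {0..1}" for s0
    using that by (simp add: rft_force_isotropic graded_lab_vel graded_body_pos rot_def cross2_def)
  have "integral {0..1} (\<lambda>s0. (1 + 1 * graded_compression s0 t)
      * cross2 (body_pos 1 graded_compression (\<lambda>s t. 0) s0 t)
          (rot (- 0) (rft_force 1 1 1 graded_compression (\<lambda>s t. 0) graded_drift (\<lambda>t. 0) s0 t)))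
      = integral {0..1} (\<lambda>s0::real. 0 :: real)"
    by (rule integral_cong) (rule torque_density)
  then show "integral {0..1} (\<lambda>s0. (1 + 1 * graded_compression s0 t)
      * cross2 (body_pos 1 graded_compression (\<lambda>s t. 0) s0 t)
          (rot (- 0) (rft_force 1 1 1 graded_compression (\<lambda>s t. 0) graded_drift (\<lambda>t. 0) s0 t))) = 0"
    by simp
qed

lemma graded_centre_geom:
  "centre_geom 1 1 graded_compression (\<lambda>s t. 0) graded_drift (\<lambda>t. 0) t = of_real (sin t / 12 + 1/2)"
proof -
  define b where "b s = s + sin t * (s\<^sup>2 - s) / 2" for s
  define Q where "Q s = sin t / 12 * b s + (b s)\<^sup>2 / 2" for s
  have "((\<lambda>s. 1 + sin t * (s - 1/2)) has_integral b 1 - b 0) {0..1}"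
    unfolding b_def
    by (rule has_integral_antiderivative)
      (auto intro!: derivative_eq_intros simp: field_simps power2_eq_square)
  then have length: "cur_length 1 1 graded_compression t = 1"
    by (simp add: cur_length_def graded_compression_def b_def integral_unique)
  have "((\<lambda>s. (1 + sin t * (s - 1/2)) * (sin t / 12 + b s)) has_integral Q 1 - Q 0) {0..1}"
    unfolding Q_def b_def
    by (rule has_integral_antiderivative)
      (auto intro!: derivative_eq_intros simp: field_simps power2_eq_square)
  moreover have "Q 1 - Q 0 = sin t / 12 + 1/2"
    by (simp add: Q_def b_def)
  ultimately have integral_Q: "((\<lambda>s. of_real ((1 + sin t * (s - 1/2)) * (sin t / 12 + b s)) :: complex)
      has_integral of_real (sin t / 12 + 1/2)) {0..1}"
    by (metis has_integral_of_real)
  have integrand_eq: "(1 + 1 * graded_compression s t) *\<^sub>R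
      lab_pos 1 graded_compression (\<lambda>s t. 0) graded_drift (\<lambda>t. 0) s t
      = of_real ((1 + sin t * (s - 1/2)) * (sin t / 12 + b s))" if "s \<in> {0..1}" for s
    using that by (simp add: graded_lab_pos graded_compression_def b_def scaleR_conv_of_real add.assoc)
  have "integral {0..1} (\<lambda>s. (1 + 1 * graded_compression s t) *\<^sub>R
      lab_pos 1 graded_compression (\<lambda>s t. 0) graded_drift (\<lambda>t. 0) s t)
      = integral {0..1} (\<lambda>s. of_real ((1 + sin t * (s - 1/2)) * (sin t / 12 + b s)))"
    by (rule integral_cong) (rule integrand_eq)
  also have "\<dots> = of_real (sin t / 12 + 1/2)"
    by (rule integral_unique[OF integral_Q])
  finally show ?thesis
    by (simp add: centre_geom_def length)
qed

lemma graded_swimmer: "rft_swimmer 1 1 1 1 graded_compression (\<lambda>s t. 0) graded_drift (\<lambda>t. 0)"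
  unfolding rft_swimmer_def
proof (intro conjI)
  show "\<forall>s0\<in>{0..1}. \<forall>t. 0 < 1 + 1 * graded_compression s0 t"
  proof (intro ballI allI)
    fix s0 t :: real
    assume "s0 \<in> {0..1}"
    then have "\<bar>s0 - 1/2\<bar> \<le> 1/2"
      by (simp add: abs_if)
    then have "\<bar>sin t * (s0 - 1/2)\<bar> \<le> 1 * (1/2)"
      unfolding abs_mult by (intro mult_mono abs_sin_le_one) auto
    then show "0 < 1 + 1 * graded_compression s0 t"
      by (simp add: graded_compression_def abs_le_iff)
  qed
  show "continuous_on ({0..1} \<times> UNIV) (\<lambda>(s, t). graded_compression s t)"
    unfolding graded_compression_def case_prod_beta' by (intro continuous_intros)
  show "\<exists>pt. continuous_on ({0..1} \<times> UNIV) (\<lambda>(s, t). pt s t) \<and>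
      (\<forall>s0\<in>{0..1}. \<forall>t. ((\<lambda>\<tau>. graded_compression s0 \<tau>) has_real_derivative pt s0 t) (at t))"
    unfolding graded_compression_def case_prod_beta'
    by (intro exI[of _ "\<lambda>s t. cos t * (s - 1/2)"] conjI ballI allI continuous_intros)
      (auto intro!: derivative_eq_intros)
  show "\<exists>tht. continuous_on ({0..1} \<times> UNIV) (\<lambda>(s, t). tht s t) \<and>
      (\<forall>s0\<in>{0..1::real}. \<forall>t. ((\<lambda>\<tau>. 0) has_real_derivative tht s0 t) (at t))"
    by (intro exI[of _ "\<lambda>s t. 0"]) simp
  show "\<forall>t. graded_drift differentiable (at t)"
  proof
    fix t :: real
    have "(graded_drift has_vector_derivative of_real (cos t / 12)) (at t)"
      unfolding graded_drift_def
      by (rule has_vector_derivative_of_real) (auto intro!: derivative_eq_intros)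
    then show "graded_drift differentiable (at t)"
      by (rule differentiableI_vector)
  qed
qed (simp_all add: graded_force_free graded_torque_free)

lemma graded_compression_has_derivative:
  "((\<lambda>\<sigma>. graded_compression \<sigma> t) has_real_derivative sin t) (at s0 within {0..1})"
  unfolding graded_compression_def by (auto intro!: derivative_eq_intros)

lemma graded_centre_geom_has_vector_derivative:
  "(centre_geom 1 1 graded_compression (\<lambda>s t. 0) graded_drift (\<lambda>t. 0)
      has_vector_derivative of_real (cos t / 12)) (at t)"
  unfolding graded_centre_geom[abs_def]
  by (rule has_vector_derivative_of_real) (auto intro!: derivative_eq_intros)

theorem non_uniform_compression_permits_motion:
  "\<exists>L0 Cpar Cperp eta p th X Th.
     rft_swimmer L0 Cpar Cperp eta p th X Th \<and> Cpar = Cperp \<and>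
     (\<forall>t. \<forall>s0\<in>{0..L0}. (\<lambda>\<sigma>. p \<sigma> t) differentiable (at s0 within {0..L0})) \<and>
     (\<exists>t. \<exists>s0\<in>{0..L0}. \<exists>d. ((\<lambda>\<sigma>. p \<sigma> t) has_real_derivative d) (at s0 within {0..L0}) \<and> d \<noteq> 0) \<and>
     (\<exists>t v. (centre_geom L0 eta p th X Th has_vector_derivative v) (at t) \<and> v \<noteq> 0)"
proof (rule exI[of _ 1], rule exI[of _ 1], rule exI[of _ 1], rule exI[of _ 1],
    rule exI[of _ graded_compression], rule exI[of _ "\<lambda>s t. 0"], rule exI[of _ graded_drift],
    rule exI[of _ "\<lambda>t. 0"], intro conjI graded_swimmer refl)
  show "\<forall>t. \<forall>s0\<in>{0..1}. (\<lambda>\<sigma>. graded_compression \<sigma> t) differentiable (at s0 within {0..1})"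
    using graded_compression_has_derivative by (auto simp: real_differentiable_def)
  show "\<exists>t. \<exists>s0\<in>{0..1}. \<exists>d.
      ((\<lambda>\<sigma>. graded_compression \<sigma> t) has_real_derivative d) (at s0 within {0..1}) \<and> d \<noteq> 0"
    using graded_compression_has_derivative[of "pi / 2" 0] by force
  show "\<exists>t v. (centre_geom 1 1 graded_compression (\<lambda>s t. 0) graded_drift (\<lambda>t. 0)
      has_vector_derivative v) (at t) \<and> v \<noteq> 0"
    using graded_centre_geom_has_vector_derivative[of 0] by force
qed

theorem proposition1:
  shows "(\<forall>L0 Cpar Cperp eta p th X Th.
            rft_swimmer L0 Cpar Cperp eta p th X Th \<and> Cpar = Cperp \<and>
            (\<forall>t. \<forall>s0\<in>{0..L0}. ((\<lambda>\<sigma>. p \<sigma> t) has_real_derivative 0) (at s0 within {0..L0}))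
            \<longrightarrow> (\<forall>t. (centre_geom L0 eta p th X Th has_vector_derivative 0) (at t)))
       \<and>
         (\<exists>L0 Cpar Cperp eta p th X Th.
            rft_swimmer L0 Cpar Cperp eta p th X Th \<and> Cpar = Cperp \<and>
            (\<forall>t. \<forall>s0\<in>{0..L0}. (\<lambda>\<sigma>. p \<sigma> t) differentiable (at s0 within {0..L0})) \<and>
            (\<exists>t. \<exists>s0\<in>{0..L0}. \<exists>d. ((\<lambda>\<sigma>. p \<sigma> t) has_real_derivative d) (at s0 within {0..L0}) \<and> d \<noteq> 0) \<and>
            (\<exists>t v. (centre_geom L0 eta p th X Th has_vector_derivative v) (at t) \<and> v \<noteq> 0))"
  using centre_geom_stationary_if_uniform_compression non_uniform_compression_permits_motion
  by blast

end
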